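(* Let $N\ge3$ and suppose $\boldsymbol{\mathfrak h}\notin\mathrm{col}(C)$. Consider the optimization problem: maximize $\boldsymbol{\mathfrak b}\cdot\boldsymbol{\mathfrak h}$ over $\boldsymbol{\mathfrak b}\in\mathbb{R}^N$ subject to $\|\boldsymbol{\mathfrak b}\|_\infty\le1$ and $\boldsymbol{\mathfrak b}\perp\mathrm{col}(C)$. Then its optimal value equals $\min_{\mathbf v\in\mathrm{col}(C)}\|\boldsymbol{\mathfrak h}-\mathbf v\|_1 = 2\min_{S\in\mathfrak{S}}\|H-S\|$ (operator norm). Moreover, if $\boldsymbol{\mathfrak b}^\diamond$ is an optimal solution and $\boldsymbol\theta=\tfrac12\arccos\boldsymbol{\mathfrak b}^\diamond$ (entrywise), then the dephasing code associated with $\boldsymbol\theta$ satisfies $PSP\in\mathbb{R}P$ for all $S\in\mathfrak{S}$, $\langle0_L|H|1_L\rangle=0$, and $\langle0_L|H|0_L\rangle-\langle1_L|H|1_L\rangle=\boldsymbol{\mathfrak h}\cdot\boldsymbol{\mathfrak b}^\diamond=\min_{\mathbf v\in\mathrm{col}(C)}\|\boldsymbol{\mathfrak h}-\mathbf v\|_1>0$. Hence the state $\tfrac1{\sqrt2}(|0_L\rangle+|1_L\rangle)$ evolving under $\omega PHP$ for time $t$ has quantum Fisher information $t^2\min_{\mathbf v\in\mathrm{col}(C)}\|\boldsymbol{\mathfrak h}-\mathbf v\|_1^2=4t^2\min_{S\in\mathfrak S}\|H-S\|^2$.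
   Context: Qubits $1,\dots,N$; $Z_j$, $X_j$ denote the Pauli $Z$, $X$ operators on qubit $j$ of $(\mathbb{C}^2)^{\otimes N}$. For $\mathbf v\in\mathbb{R}^N$, $\mathbf v\cdot\mathbf Z:=\sum_j v_jZ_j$. Dephasing model: $\boldsymbol{\mathfrak h}\in\mathbb{R}^N$, $H=\tfrac12\boldsymbol{\mathfrak h}\cdot\mathbf Z$; $C$ is a real symmetric positive semidefinite $N\times N$ matrix with orthonormal eigenvectors $\mathbf v_1,\dots,\mathbf v_N$ and eigenvalues $\lambda_1,\dots,\lambda_N\ge0$; $L_j=\sqrt{\lambda_j}\,\mathbf v_j\cdot\mathbf Z$; $\mathrm{col}(C)$ is the column space of $C$; the Lindblad span $\mathfrak{S}$ is the real span of $I$, all $L_i$ and all $L_iL_j$. Dephasing code for $\boldsymbol\theta\in\mathbb{R}^N$: $|0_L\rangle=\bigotimes_{j=1}^N(\cos\theta_j|0\rangle+i\sin\theta_j|1\rangle)$, $|1_L\rangle=X^{\otimes N}|0_L\rangle$, $P=|0_L\rangle\langle0_L|+|1_L\rangle\langle1_L|$. $\|\cdot\|_1,\|\cdot\|_\infty$ are the $\ell^1$ and max norms on $\mathbb{R}^N$. For a pure state $|\psi\rangle$ under Hamiltonian $\omega K$ for time $t$, the quantum Fisher information is $4t^2(\langle\psi|K^2|\psi\rangle-\langle\psi|K|\psi\rangle^2)$. *)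

theory Defs
  imports "HOL-Analysis.Analysis"
begin

text \<open>Qubits are indexed by a finite type 'n (N = CARD('n)). A computational basis
state of (C^2)^{\<otimes>N} is a bit string s :: 'n \<Rightarrow> bool (s j = True means |1> on qubit j).\<close>

type_synonym 'n qstate = "complex ^ ('n \<Rightarrow> bool)"
type_synonym 'n qop = "complex ^ ('n \<Rightarrow> bool) ^ ('n \<Rightarrow> bool)"

text \<open>Single-qubit matrices (entries indexed by bool, False = |0>, True = |1>).\<close>
definition pauliZ1 :: "bool \<Rightarrow> bool \<Rightarrow> complex" where
  "pauliZ1 a b = (if a = b then (if a then -1 else 1) else 0)"
definition pauliX1 :: "bool \<Rightarrow> bool \<Rightarrow> complex" where
  "pauliX1 a b = (if a \<noteq> b then 1 else 0)"
definition id1 :: "bool \<Rightarrow> bool \<Rightarrow> complex" where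
  "id1 a b = (if a = b then 1 else 0)"

definition op_on :: "'n::finite \<Rightarrow> (bool \<Rightarrow> bool \<Rightarrow> complex) \<Rightarrow> 'n qop" where
  "op_on j M = (\<chi> s t. \<Prod>k\<in>UNIV. (if k = j then M else id1) (s k) (t k))"
definition tensor_pow :: "(bool \<Rightarrow> bool \<Rightarrow> complex) \<Rightarrow> 'n::finite qop" where
  "tensor_pow M = (\<chi> s t. \<Prod>k\<in>UNIV. M (s k) (t k))"

definition Zop :: "'n::finite \<Rightarrow> 'n qop" where "Zop j = op_on j pauliZ1"
definition Xop :: "'n::finite \<Rightarrow> 'n qop" where "Xop j = op_on j pauliX1"

definition dotZ :: "real ^ 'n \<Rightarrow> 'n::finite qop" where
  "dotZ v = (\<Sum>j\<in>UNIV. (v $ j) *\<^sub>R Zop j)"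

definition hamiltonian :: "real ^ 'n \<Rightarrow> 'n::finite qop" where
  "hamiltonian h = (1/2) *\<^sub>R dotZ h"

text \<open>Lindblad operators L_j = sqrt(lambda_j) v_j\<cdot>Z and the Lindblad span (real span).\<close>
definition lindblad :: "('n \<Rightarrow> real) \<Rightarrow> ('n \<Rightarrow> real ^ 'n) \<Rightarrow> 'n \<Rightarrow> 'n::finite qop" where
  "lindblad lam vs j = sqrt (lam j) *\<^sub>R dotZ (vs j)"

definition lindblad_span :: "('n \<Rightarrow> real) \<Rightarrow> ('n \<Rightarrow> real ^ 'n) \<Rightarrow> 'n::finite qop set" where
  "lindblad_span lam vs = span ({mat 1} \<union> range (lindblad lam vs)
      \<union> {lindblad lam vs i ** lindblad lam vs j | i j. True})"

definition opnorm :: "'n::finite qop \<Rightarrow> real" where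
  "opnorm A = onorm (\<lambda>x. A *v x)"

definition l1norm :: "real ^ 'n::finite \<Rightarrow> real" where
  "l1norm v = (\<Sum>j\<in>UNIV. \<bar>v $ j\<bar>)"

definition colspace :: "real ^ 'n ^ 'n \<Rightarrow> (real ^ 'n::finite) set" where
  "colspace C = range (\<lambda>x. C *v x)"

definition ket0L :: "real ^ 'n \<Rightarrow> 'n::finite qstate" where
  "ket0L \<theta> = (\<chi> s. \<Prod>j\<in>UNIV. (if s j then \<i> * complex_of_real (sin (\<theta> $ j))
                                   else complex_of_real (cos (\<theta> $ j))))"
definition ket1L :: "real ^ 'n \<Rightarrow> 'n::finite qstate" where
  "ket1L \<theta> = tensor_pow pauliX1 *v ket0L \<theta>"

definition outer :: "'n::finite qstate \<Rightarrow> 'n qstate \<Rightarrow> 'n qop" where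
  "outer \<phi> \<psi> = (\<chi> s t. \<phi> $ s * cnj (\<psi> $ t))"

definition code_proj :: "real ^ 'n \<Rightarrow> 'n::finite qop" where
  "code_proj \<theta> = outer (ket0L \<theta>) (ket0L \<theta>) + outer (ket1L \<theta>) (ket1L \<theta>)"

definition braket :: "'n::finite qstate \<Rightarrow> 'n qop \<Rightarrow> 'n qstate \<Rightarrow> complex" where
  "braket \<phi> A \<psi> = (\<Sum>s\<in>UNIV. cnj (\<phi> $ s) * (A *v \<psi>) $ s)"

definition qfi :: "'n::finite qstate \<Rightarrow> 'n qop \<Rightarrow> real \<Rightarrow> complex" where
  "qfi \<psi> K t = 4 * complex_of_real (t^2) * (braket \<psi> (K ** K) \<psi> - (braket \<psi> K \<psi>)^2)"

definition feasible :: "real ^ 'n ^ 'n \<Rightarrow> real ^ 'n::finite \<Rightarrow> bool" where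
  "feasible C b \<longleftrightarrow> infnorm b \<le> 1 \<and> (\<forall>v\<in>colspace C. b \<bullet> v = 0)"

end

theory Submission
  imports Defs
begin

text \<open>
Weak duality is immediate: if \<open>b \<perp> col(C)\<close> and \<open>\<bar>b\<^sub>j\<bar> \<le> 1\<close>, then
\<open>b \<bullet> h = b \<bullet> (h - v) \<le> \<parallel>h - v\<parallel>\<^sub>1\<close> for every \<open>v \<in> col(C)\<close>.  An optimal \<open>b\<close> is the
normal of a hyperplane separating \<open>col(C)\<close> from the open \<open>\<ell>\<^sub>1\<close>-ball of optimal radius
around \<open>h\<close>.

In the code with \<open>cos 2\<theta>\<^sub>j = b\<^sub>j\<close>, a Z-string \<open>Z\<^sub>K\<close> has diagonal elements
\<open>\<Prod>\<^sub>j\<^sub>\<in>\<^sub>K b\<^sub>j\<close> and \<open>\<Prod>\<^sub>j\<^sub>\<in>\<^sub>K (-b\<^sub>j)\<close>, and its off-diagonal elements vanish unless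
\<open>K\<close> contains every qubit.  The Lindblad span is spanned by Z-strings of even length
\<open>\<le> 2 < N\<close> and by \<open>v \<bullet> Z\<close> with \<open>v \<in> col(C)\<close>, hence \<open>v \<perp> b\<close>; so each of its elements \<open>S\<close>
acts on the code as a real scalar.  Therefore
\<open>\<langle>0\<^sub>L|H - S|0\<^sub>L\<rangle> - \<langle>1\<^sub>L|H - S|1\<^sub>L\<rangle> = h \<bullet> b\<close>, which forces \<open>\<parallel>H - S\<parallel> \<ge> h \<bullet> b / 2\<close>.
The bound is attained by \<open>S = (v \<bullet> Z) / 2\<close> for an \<open>\<ell>\<^sub>1\<close>-closest \<open>v \<in> col(C)\<close>, because
\<open>w \<bullet> Z\<close> is diagonal with entries bounded by \<open>\<parallel>w\<parallel>\<^sub>1\<close>.  Finally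
\<open>PHP = (h \<bullet> b / 2)(|0\<^sub>L\<rangle>\<langle>0\<^sub>L| - |1\<^sub>L\<rangle>\<langle>1\<^sub>L|)\<close>, whose variance in
\<open>(|0\<^sub>L\<rangle> + |1\<^sub>L\<rangle>) / \<surd>2\<close> is \<open>(h \<bullet> b)\<^sup>2 / 4\<close>.
\<close>

section \<open>Product operators on qubits\<close>

lemma sum_UNIV_fun_prod:
  fixes g :: "'n::finite \<Rightarrow> 'b::finite \<Rightarrow> 'a::comm_semiring_1"
  shows "(\<Sum>s\<in>UNIV. \<Prod>j\<in>UNIV. g j (s j)) = (\<Prod>j\<in>UNIV. \<Sum>x\<in>UNIV. g j x)"
proof -
  have "PiE (UNIV::'n set) (\<lambda>_. UNIV::'b set) = UNIV" by auto
  then show ?thesis by (simp add: prod_sum_PiE)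
qed

definition product_state :: "('n::finite \<Rightarrow> bool \<Rightarrow> complex) \<Rightarrow> 'n qstate" where
  "product_state a = (\<chi> s. \<Prod>j\<in>UNIV. a j (s j))"

definition product_op :: "('n::finite \<Rightarrow> bool \<Rightarrow> bool \<Rightarrow> complex) \<Rightarrow> 'n qop" where
  "product_op F = (\<chi> s t. \<Prod>j\<in>UNIV. F j (s j) (t j))"

lemma product_op_mult:
  "product_op F ** product_op G = product_op (\<lambda>j x z. \<Sum>y\<in>UNIV. F j x y * G j y z)"
proof -
  have "(\<Sum>u\<in>UNIV. \<Prod>j\<in>UNIV. F j (s j) (u j) * G j (u j) (t j)) =
      (\<Prod>j\<in>UNIV. \<Sum>y\<in>UNIV. F j (s j) y * G j y (t j))" for s t :: "'a \<Rightarrow> bool"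
    by (rule sum_UNIV_fun_prod)
  then show ?thesis
    by (simp add: vec_eq_iff matrix_matrix_mult_def product_op_def prod.distrib[symmetric])
qed

lemma product_op_mult_vec:
  "product_op F *v product_state a = product_state (\<lambda>j x. \<Sum>y\<in>UNIV. F j x y * a j y)"
proof -
  have "(\<Sum>t\<in>UNIV. \<Prod>j\<in>UNIV. F j (s j) (t j) * a j (t j)) =
      (\<Prod>j\<in>UNIV. \<Sum>y\<in>UNIV. F j (s j) y * a j y)" for s :: "'a \<Rightarrow> bool"
    by (rule sum_UNIV_fun_prod)
  then show ?thesis
    by (simp add: vec_eq_iff matrix_vector_mult_def product_op_def product_state_def
        prod.distrib[symmetric])
qed

lemma braket_product:
  "braket (product_state a) (product_op F) (product_state c) =
     (\<Prod>j\<in>UNIV. \<Sum>x\<in>UNIV. cnj (a j x) * (\<Sum>y\<in>UNIV. F j x y * c j y))"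
  unfolding braket_def product_op_mult_vec
  by (simp add: product_state_def prod.distrib[symmetric]) (rule sum_UNIV_fun_prod)

definition zstring :: "'n set \<Rightarrow> 'n::finite qop" where
  "zstring K = product_op (\<lambda>j. if j \<in> K then pauliZ1 else id1)"

lemma Zop_eq_zstring: "Zop j = zstring {j}"
  by (simp add: Zop_def op_on_def zstring_def product_op_def)

lemma mat_1_eq_zstring: "mat 1 = (zstring {} :: 'n::finite qop)"
proof -
  have "(\<Prod>j\<in>UNIV. id1 (s j) (t j)) = (if s = t then 1 else 0)" for s t :: "'n \<Rightarrow> bool"
    by (auto simp: id1_def fun_eq_iff intro: prod_zero)
  then show ?thesis by (simp add: zstring_def product_op_def mat_def vec_eq_iff)
qed

lemma zstring_mult: "zstring K ** zstring L = zstring ((K - L) \<union> (L - K))"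
  unfolding zstring_def product_op_mult
  by (rule arg_cong[where f = product_op]) (auto simp: UNIV_bool pauliZ1_def id1_def fun_eq_iff)

lemma matrix_sum_mult: "(\<Sum>k\<in>S. A k) ** B = (\<Sum>k\<in>S. A k ** (B :: 'a::comm_ring_1 ^ 'n ^ 'n))"
  by (induct S rule: infinite_finite_induct)
    (auto simp: vec_eq_iff matrix_matrix_mult_def algebra_simps sum.distrib)

lemma matrix_mult_sum: "B ** (\<Sum>k\<in>S. A k) = (\<Sum>k\<in>S. B ** (A k :: 'a::comm_ring_1 ^ 'n ^ 'n))"
  by (induct S rule: infinite_finite_induct) (auto simp: matrix_add_ldistrib)

lemma linear_dotZ: "linear dotZ"
  by (rule linearI) (simp_all add: dotZ_def scaleR_add_left sum.distrib scaleR_sum_right)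

lemma dotZ_eq_zstring: "dotZ u = (\<Sum>k\<in>UNIV. (u $ k) *\<^sub>R zstring {k})"
  by (simp add: dotZ_def Zop_eq_zstring)

lemma dotZ_mult_dotZ:
  "dotZ u ** dotZ w =
     (\<Sum>l\<in>UNIV. \<Sum>k\<in>UNIV. (u $ k * w $ l) *\<^sub>R zstring ({k} - {l} \<union> ({l} - {k})))"
  by (simp add: dotZ_eq_zstring matrix_sum_mult matrix_mult_sum zstring_mult matrix_scalar_ac
      scaleR_sum_right mult.commute flip: scalar_matrix_assoc)

section \<open>Matrix elements and operator norms\<close>

lemma braket_expand: "braket p A q = (\<Sum>s\<in>UNIV. \<Sum>t\<in>UNIV. cnj (p $ s) * A $ s $ t * q $ t)"
  by (simp add: braket_def matrix_vector_mult_def sum_distrib_left mult.assoc)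

lemma braket_add [simp]: "braket p (A + B) q = braket p A q + braket p B q"
  by (simp add: braket_expand algebra_simps sum.distrib)

lemma braket_diff [simp]: "braket p (A - B) q = braket p A q - braket p B q"
  by (simp add: braket_expand algebra_simps sum_subtractf)

lemma braket_zero [simp]: "braket p 0 q = 0"
  by (simp add: braket_expand)

lemma braket_scaleR [simp]: "braket p (r *\<^sub>R A) q = of_real r * braket p A q"
  by (simp add: braket_expand sum_distrib_left scaleR_conv_of_real[where 'a = complex]
      algebra_simps)

lemma braket_sum [simp]: "braket p (\<Sum>k\<in>S. A k) q = (\<Sum>k\<in>S. braket p (A k) q)"
  by (induct S rule: infinite_finite_induct) auto

lemma braket_mat_1: "braket p (mat 1) q = (\<Sum>s\<in>UNIV. cnj (p $ s) * q $ s)"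
  by (simp add: braket_def)

definition diag2 :: "'n::finite qstate \<Rightarrow> 'n qstate \<Rightarrow> complex \<Rightarrow> complex \<Rightarrow> 'n qop" where
  "diag2 p q x y = (\<chi> s t. x * p $ s * cnj (p $ t) + y * q $ s * cnj (q $ t))"

lemma scaleR_diag2: "r *\<^sub>R diag2 p q x y = diag2 p q (of_real r * x) (of_real r * y)"
  by (simp add: diag2_def vec_eq_iff scaleR_conv_of_real[where 'a = complex] algebra_simps)

lemma braket_diag2:
  "braket r (diag2 p q x y) r' =
     x * braket r (mat 1) p * braket p (mat 1) r' + y * braket r (mat 1) q * braket q (mat 1) r'"
  unfolding braket_mat_1
  by (simp add: braket_def diag2_def matrix_vector_mult_def sum.distrib sum_distrib_left
      sum_distrib_right algebra_simps)

lemma diag2_sandwich: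
  assumes "braket p A q = 0" and "braket q A p = 0"
  shows "diag2 p q x y ** A ** diag2 p q x' y' =
    diag2 p q (x * braket p A p * x') (y * braket q A q * y')"
proof -
  have row: "(diag2 p q x y ** A) $ s $ u =
      x * p $ s * (\<Sum>w\<in>UNIV. cnj (p $ w) * A $ w $ u) +
      y * q $ s * (\<Sum>w\<in>UNIV. cnj (q $ w) * A $ w $ u)" for s u
    by (simp add: diag2_def matrix_matrix_mult_def sum.distrib sum_distrib_left algebra_simps)
  have contract: "(\<Sum>u\<in>UNIV. (\<Sum>w\<in>UNIV. cnj (a $ w) * A $ w $ u) * b $ u) = braket a A b"
    for a b
    by (simp add: braket_expand sum_distrib_right mult.assoc) (rule sum.swap)
  have "(diag2 p q x y ** A ** diag2 p q x' y') $ s $ t =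
     x * p $ s * x' * cnj (p $ t) * braket p A p + x * p $ s * y' * cnj (q $ t) * braket p A q
     + y * q $ s * x' * cnj (p $ t) * braket q A p + y * q $ s * y' * cnj (q $ t) * braket q A q"
    for s t
    unfolding matrix_matrix_mult_def[of "diag2 p q x y ** A"] row contract[symmetric]
    by (simp add: diag2_def sum.distrib sum_distrib_left sum_distrib_right algebra_simps)
  then show ?thesis using assms by (simp add: vec_eq_iff diag2_def)
qed

lemma norm_eq_1_braket:
  assumes "braket p (mat 1) p = 1"
  shows "norm p = 1"
proof -
  have "(complex_of_real (norm z))\<^sup>2 = cnj z * z" for z
    by (simp add: complex_norm_square mult.commute flip: of_real_power)
  then have "of_real ((norm p)\<^sup>2) = braket p (mat 1) p"
    by (simp add: braket_mat_1 norm_vec_def L2_set_def sum_nonneg)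
  then have "(norm p)\<^sup>2 = 1" using assms by (metis of_real_eq_1_iff)
  then show ?thesis using norm_ge_zero[of p] by (auto simp: power2_eq_1_iff)
qed

lemma bounded_linear_matrix_vector_mult: "bounded_linear (\<lambda>x. (A :: 'n::finite qop) *v x)"
  using linear_conv_bounded_linear matrix_vector_mul_linear by blast

lemma norm_braket_le: "norm (braket p A q) \<le> norm p * opnorm A * norm q"
proof -
  have "norm (braket p A q) \<le> (\<Sum>s\<in>UNIV. norm (p $ s) * norm ((A *v q) $ s))"
    unfolding braket_def by (rule order_trans[OF norm_sum]) (simp add: norm_mult)
  also have "\<dots> \<le> norm p * norm (A *v q)"
    unfolding norm_vec_def
    using L2_set_mult_ineq[of "\<lambda>s. norm (p $ s)" "\<lambda>s. norm ((A *v q) $ s)" UNIV] by simp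
  also have "\<dots> \<le> norm p * (opnorm A * norm q)"
    unfolding opnorm_def by (intro mult_left_mono onorm[OF bounded_linear_matrix_vector_mult]) simp
  finally show ?thesis by (simp add: mult.assoc)
qed

lemma opnorm_diagonal_le:
  fixes d :: "('n::finite \<Rightarrow> bool) \<Rightarrow> complex"
  assumes "\<And>s. norm (d s) \<le> c"
  shows "opnorm (\<chi> s t. if s = t then d s else 0) \<le> c"
  unfolding opnorm_def
proof (rule onorm_le)
  fix x :: "'n qstate"
  have "(\<chi> s t. if s = t then d s else 0) *v x = (\<chi> s. d s * x $ s)"
    by (simp add: vec_eq_iff matrix_vector_mult_def if_distrib if_distribR cong: if_cong)
  moreover have "L2_set (\<lambda>s. norm (d s * x $ s)) UNIV \<le> L2_set (\<lambda>s. c * norm (x $ s)) UNIV"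
    using assms by (intro L2_set_mono) (simp_all add: norm_mult mult_right_mono)
  moreover have "0 \<le> c" using assms[of undefined] norm_ge_zero order_trans by blast
  ultimately show "norm ((\<chi> s t. if s = t then d s else 0) *v x) \<le> c * norm x"
    unfolding norm_vec_def by (simp add: L2_set_right_distrib)
qed

lemma dotZ_diagonal:
  fixes w :: "real ^ 'n::finite"
  shows "dotZ w =
    (\<chi> s t. if s = t then (\<Sum>k\<in>UNIV. of_real (w $ k) * (if s k then -1 else 1)) else 0)"
proof -
  have "Zop k = (\<chi> s t. if s = t then (if s k then -1 else 1) else 0)" for k :: 'n
  proof -
    have "(\<Prod>j\<in>UNIV. (if j = k then pauliZ1 else id1) (s j) (t j)) =
        (if s = t then (if s k then -1 else 1) else 0)" for s t :: "'n \<Rightarrow> bool"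
    proof (cases "s = t")
      case True
      have "(\<Prod>j\<in>UNIV. (if j = k then pauliZ1 else id1) (s j) (s j)) =
          (\<Prod>j\<in>UNIV. if j = k then pauliZ1 (s k) (s k) else 1)"
        by (rule prod.cong) (simp_all add: id1_def)
      with True show ?thesis by (simp add: pauliZ1_def)
    next
      case False
      then obtain j where "s j \<noteq> t j" by auto
      then have "(if j = k then pauliZ1 else id1) (s j) (t j) = 0"
        by (simp add: pauliZ1_def id1_def)
      with False show ?thesis by (metis (no_types, lifting) UNIV_I finite prod_zero)
    qed
    then show ?thesis by (simp add: Zop_def op_on_def vec_eq_iff)
  qed
  then have "dotZ w $ s $ t =
      (if s = t then (\<Sum>k\<in>UNIV. of_real (w $ k) * (if s k then -1 else 1)) else 0)" for s t
    by (cases "s = t") (simp_all add: dotZ_def sum_component scaleR_conv_of_real[where 'a = complex])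
  then show ?thesis by (simp add: vec_eq_iff)
qed

lemma opnorm_dotZ_le:
  fixes w :: "real ^ 'n::finite"
  shows "opnorm (dotZ w) \<le> l1norm w"
  unfolding dotZ_diagonal l1norm_def
proof (rule opnorm_diagonal_le)
  fix s :: "'n \<Rightarrow> bool"
  have "norm (\<Sum>k\<in>UNIV. of_real (w $ k) * (if s k then -1 else 1) :: complex) \<le>
      (\<Sum>k\<in>UNIV. norm (of_real (w $ k) * (if s k then -1 else 1) :: complex))"
    by (rule norm_sum)
  also have "\<dots> = (\<Sum>j\<in>UNIV. \<bar>w $ j\<bar>)"
    by (simp add: norm_mult if_distrib[where f = norm] cong: if_cong)
  finally show "norm (\<Sum>k\<in>UNIV. of_real (w $ k) * (if s k then -1 else 1) :: complex) \<le>
      (\<Sum>j\<in>UNIV. \<bar>w $ j\<bar>)" .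
qed

section \<open>The dephasing code\<close>

text \<open>\<open>bloch_z \<theta> $ j\<close> is \<open>\<langle>0\<^sub>L|Z\<^sub>j|0\<^sub>L\<rangle>\<close>; for \<open>\<theta>\<^sub>j = arccos b\<^sub>j / 2\<close> it is \<open>b\<^sub>j\<close>.\<close>

definition bloch_z :: "real ^ 'n \<Rightarrow> real ^ 'n::finite" where
  "bloch_z \<theta> = (\<chi> j. cos (2 * \<theta> $ j))"

lemma ket0L_product_state:
  "ket0L \<theta> =
     product_state (\<lambda>j x. if x then \<i> * of_real (sin (\<theta> $ j)) else of_real (cos (\<theta> $ j)))"
  by (simp add: ket0L_def product_state_def)

lemma ket1L_product_state:
  "ket1L \<theta> =
     product_state (\<lambda>j x. if x then of_real (cos (\<theta> $ j)) else \<i> * of_real (sin (\<theta> $ j)))"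
proof -
  have X: "tensor_pow pauliX1 = product_op (\<lambda>_. pauliX1)"
    by (simp add: tensor_pow_def product_op_def)
  show ?thesis
    unfolding ket1L_def X ket0L_product_state product_op_mult_vec
    by (rule arg_cong[where f = product_state]) (simp add: UNIV_bool pauliX1_def fun_eq_iff)
qed

lemma braket_ket0L_zstring:
  "braket (ket0L \<theta>) (zstring K) (ket0L \<theta>) = (\<Prod>j\<in>K. of_real (bloch_z \<theta> $ j))"
proof -
  have "braket (ket0L \<theta>) (zstring K) (ket0L \<theta>) =
      (\<Prod>j\<in>UNIV. if j \<in> K then of_real (bloch_z \<theta> $ j) else 1)"
    unfolding ket0L_product_state zstring_def braket_product bloch_z_def vec_lambda_beta cos_double
    by (intro prod.cong) (auto simp: UNIV_bool pauliZ1_def id1_def power2_eq_square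
        algebra_simps simp flip: of_real_mult of_real_add)
  then show ?thesis by (simp add: prod.If_cases)
qed

lemma braket_ket1L_zstring:
  "braket (ket1L \<theta>) (zstring K) (ket1L \<theta>) = (\<Prod>j\<in>K. - of_real (bloch_z \<theta> $ j))"
proof -
  have "braket (ket1L \<theta>) (zstring K) (ket1L \<theta>) =
      (\<Prod>j\<in>UNIV. if j \<in> K then - of_real (bloch_z \<theta> $ j) else 1)"
    unfolding ket1L_product_state zstring_def braket_product bloch_z_def vec_lambda_beta cos_double
    by (intro prod.cong) (auto simp: UNIV_bool pauliZ1_def id1_def power2_eq_square
        algebra_simps simp flip: of_real_mult of_real_add)
  then show ?thesis by (simp add: prod.If_cases)
qed

lemma braket_ket0L_ket1L_zstring:
  assumes "K \<noteq> UNIV"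
  shows "braket (ket0L \<theta>) (zstring K) (ket1L \<theta>) = 0"
proof -
  obtain j where "j \<notin> K" using assms by blast
  then show ?thesis
    unfolding ket0L_product_state ket1L_product_state zstring_def braket_product
    by (intro prod_zero) (auto simp: UNIV_bool id1_def algebra_simps)
qed

lemma braket_ket1L_ket0L_zstring:
  assumes "K \<noteq> UNIV"
  shows "braket (ket1L \<theta>) (zstring K) (ket0L \<theta>) = 0"
proof -
  obtain j where "j \<notin> K" using assms by blast
  then show ?thesis
    unfolding ket0L_product_state ket1L_product_state zstring_def braket_product
    by (intro prod_zero) (auto simp: UNIV_bool id1_def algebra_simps)
qed

lemma code_orthonormal:
  "braket (ket0L \<theta>) (mat 1) (ket0L \<theta>) = 1" "braket (ket1L \<theta>) (mat 1) (ket1L \<theta>) = 1"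
  "braket (ket0L \<theta>) (mat 1) (ket1L \<theta>) = 0" "braket (ket1L \<theta>) (mat 1) (ket0L \<theta>) = 0"
  unfolding mat_1_eq_zstring
  by (simp_all add: braket_ket0L_zstring braket_ket1L_zstring braket_ket0L_ket1L_zstring
      braket_ket1L_ket0L_zstring)

lemma braket_code_dotZ:
  fixes \<theta> :: "real ^ 'n::finite"
  assumes "CARD('n) \<ge> 2"
  shows "braket (ket0L \<theta>) (dotZ u) (ket0L \<theta>) = of_real (u \<bullet> bloch_z \<theta>)"
    and "braket (ket1L \<theta>) (dotZ u) (ket1L \<theta>) = - of_real (u \<bullet> bloch_z \<theta>)"
    and "braket (ket0L \<theta>) (dotZ u) (ket1L \<theta>) = 0"
    and "braket (ket1L \<theta>) (dotZ u) (ket0L \<theta>) = 0"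
proof -
  have "{k} \<noteq> UNIV" for k :: 'n
  proof
    assume "{k} = UNIV"
    then have "CARD('n) = card {k}" by simp
    with assms show False by simp
  qed
  then show "braket (ket0L \<theta>) (dotZ u) (ket1L \<theta>) = 0"
    and "braket (ket1L \<theta>) (dotZ u) (ket0L \<theta>) = 0"
    by (simp_all add: dotZ_eq_zstring braket_ket0L_ket1L_zstring braket_ket1L_ket0L_zstring)
  show "braket (ket0L \<theta>) (dotZ u) (ket0L \<theta>) = of_real (u \<bullet> bloch_z \<theta>)"
    by (simp add: dotZ_eq_zstring braket_ket0L_zstring inner_vec_def)
  show "braket (ket1L \<theta>) (dotZ u) (ket1L \<theta>) = - of_real (u \<bullet> bloch_z \<theta>)"
    by (simp add: dotZ_eq_zstring braket_ket1L_zstring inner_vec_def sum_negf)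
qed

lemma code_gap_le_opnorm:
  "norm (braket (ket0L \<theta>) A (ket0L \<theta>) - braket (ket1L \<theta>) A (ket1L \<theta>)) \<le> 2 * opnorm A"
proof -
  have "norm (ket0L \<theta>) = 1" and "norm (ket1L \<theta>) = 1"
    by (simp_all add: norm_eq_1_braket code_orthonormal)
  then have "norm (braket (ket0L \<theta>) A (ket0L \<theta>)) \<le> opnorm A"
    and "norm (braket (ket1L \<theta>) A (ket1L \<theta>)) \<le> opnorm A"
    using norm_braket_le[of "ket0L \<theta>" A "ket0L \<theta>"] norm_braket_le[of "ket1L \<theta>" A "ket1L \<theta>"]
    by simp_all
  then show ?thesis
    using norm_triangle_ineq4[of "braket (ket0L \<theta>) A (ket0L \<theta>)" "braket (ket1L \<theta>) A (ket1L \<theta>)"]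
    by linarith
qed

text \<open>The Knill--Laflamme condition \<open>P S P \<in> \<real> P\<close>, in terms of matrix elements.\<close>

definition code_scalar :: "real ^ 'n \<Rightarrow> 'n::finite qop \<Rightarrow> bool" where
  "code_scalar \<theta> S \<longleftrightarrow>
     braket (ket0L \<theta>) S (ket1L \<theta>) = 0 \<and> braket (ket1L \<theta>) S (ket0L \<theta>) = 0 \<and>
     braket (ket0L \<theta>) S (ket0L \<theta>) = braket (ket1L \<theta>) S (ket1L \<theta>) \<and>
     braket (ket0L \<theta>) S (ket0L \<theta>) \<in> \<real>"

lemma subspace_code_scalar: "subspace {S. code_scalar \<theta> S}"
  unfolding subspace_def code_scalar_def by (auto intro: Reals_add Reals_mult)

lemma code_scalar_zstring:
  assumes "even (card K)" and "K \<noteq> UNIV"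
  shows "code_scalar \<theta> (zstring K)"
  using assms
  by (simp add: code_scalar_def braket_ket0L_zstring braket_ket1L_zstring prod_uminus
      braket_ket0L_ket1L_zstring braket_ket1L_ket0L_zstring flip: of_real_prod)

lemma code_scalar_dotZ:
  fixes \<theta> :: "real ^ 'n::finite"
  assumes "CARD('n) \<ge> 2" and "u \<bullet> bloch_z \<theta> = 0"
  shows "code_scalar \<theta> (dotZ u)"
  using assms by (simp add: code_scalar_def braket_code_dotZ)

lemma code_scalar_dotZ_mult:
  fixes \<theta> :: "real ^ 'n::finite"
  assumes "CARD('n) \<ge> 3"
  shows "code_scalar \<theta> (dotZ u ** dotZ w)"
proof -
  have "code_scalar \<theta> (zstring ({k} - {l} \<union> ({l} - {k})))" for k l :: 'n
  proof (rule code_scalar_zstring)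
    show "even (card ({k} - {l} \<union> ({l} - {k})))" by (cases "k = l") auto
    have "card ({k} - {l} \<union> ({l} - {k})) \<le> 2" by (cases "k = l") auto
    then show "{k} - {l} \<union> ({l} - {k}) \<noteq> UNIV"
      using assms by (metis not_less_eq_eq numeral_2_eq_2 numeral_3_eq_3)
  qed
  then show ?thesis
    unfolding dotZ_mult_dotZ
    by (intro subspace_sum[OF subspace_code_scalar, simplified]
        subspace_scale[OF subspace_code_scalar, simplified])
qed

lemma code_proj_eq_diag2: "code_proj \<theta> = diag2 (ket0L \<theta>) (ket1L \<theta>) 1 1"
  by (simp add: code_proj_def outer_def diag2_def vec_eq_iff)

lemma code_proj_sandwich:
  assumes "code_scalar \<theta> S"
  shows "\<exists>r::real. code_proj \<theta> ** S ** code_proj \<theta> = r *\<^sub>R code_proj \<theta>"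
proof -
  have "braket (ket0L \<theta>) S (ket0L \<theta>) \<in> \<real>"
    using assms unfolding code_scalar_def by blast
  then obtain r where r: "braket (ket0L \<theta>) S (ket0L \<theta>) = of_real r"
    by (rule Reals_cases)
  have "code_proj \<theta> ** S ** code_proj \<theta> = r *\<^sub>R code_proj \<theta>"
    using assms r unfolding code_scalar_def code_proj_eq_diag2
    by (simp add: diag2_sandwich scaleR_diag2)
  then show ?thesis ..
qed

lemma code_diag2_mult:
  "diag2 (ket0L \<theta>) (ket1L \<theta>) x y ** diag2 (ket0L \<theta>) (ket1L \<theta>) x' y' =
     diag2 (ket0L \<theta>) (ket1L \<theta>) (x * x') (y * y')"
  using diag2_sandwich[of "ket0L \<theta>" "mat 1" "ket1L \<theta>" x y x' y']
  by (simp add: code_orthonormal)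

lemma braket_code_superposition:
  fixes \<theta> :: "real ^ 'n::finite"
  defines "\<psi> \<equiv> (1 / sqrt 2) *\<^sub>R (ket0L \<theta> + ket1L \<theta>)"
  shows "braket \<psi> (diag2 (ket0L \<theta>) (ket1L \<theta>) x y) \<psi> = (x + y) / 2"
proof -
  have bra: "braket (c *\<^sub>R (a + b)) (mat 1) d =
      of_real c * (braket a (mat 1) d + braket b (mat 1) d)"
    and ket: "braket d (mat 1) (c *\<^sub>R (a + b)) =
      of_real c * (braket d (mat 1) a + braket d (mat 1) b)"
    for a b d :: "'n qstate" and c :: real
    by (simp_all add: braket_mat_1 scaleR_conv_of_real[where 'a = complex] sum_distrib_left
        sum.distrib algebra_simps)
  have "complex_of_real (1 / sqrt 2) * complex_of_real (1 / sqrt 2) = 1 / 2"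
    by (simp flip: of_real_mult)
  then show ?thesis
    unfolding \<psi>_def braket_diag2 bra ket code_orthonormal by (simp add: algebra_simps)
qed

lemma code_proj_hamiltonian:
  fixes \<theta> :: "real ^ 'n::finite"
  assumes "CARD('n) \<ge> 2"
  shows "code_proj \<theta> ** hamiltonian h ** code_proj \<theta> =
    diag2 (ket0L \<theta>) (ket1L \<theta>) (of_real (h \<bullet> bloch_z \<theta> / 2)) (of_real (- (h \<bullet> bloch_z \<theta>) / 2))"
  using braket_code_dotZ[OF assms, of \<theta> h]
  by (simp add: code_proj_eq_diag2 diag2_sandwich hamiltonian_def)

lemma qfi_code_hamiltonian:
  fixes \<theta> :: "real ^ 'n::finite"
  assumes "CARD('n) \<ge> 2"
  shows "qfi ((1 / sqrt 2) *\<^sub>R (ket0L \<theta> + ket1L \<theta>))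
      (code_proj \<theta> ** hamiltonian h ** code_proj \<theta>) t = of_real (t\<^sup>2 * (h \<bullet> bloch_z \<theta>)\<^sup>2)"
  unfolding qfi_def code_proj_hamiltonian[OF assms] code_diag2_mult braket_code_superposition
  by (simp add: power2_eq_square field_simps flip: of_real_mult)

section \<open>The Lindblad span\<close>

lemma orthonormal_expansion:
  fixes vs :: "'n::finite \<Rightarrow> real ^ 'n"
  assumes orth: "\<forall>i j. vs i \<bullet> vs j = (if i = j then 1 else 0)"
  shows "v = (\<Sum>j\<in>UNIV. (v \<bullet> vs j) *\<^sub>R vs j)"
proof -
  have inj: "inj vs"
    by (rule injI) (metis orth zero_neq_one)
  have orthogonal: "pairwise orthogonal (range vs)"
    using orth by (auto simp: pairwise_def orthogonal_def)
  have unit: "\<And>x. x \<in> range vs \<Longrightarrow> norm x = 1"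
    using orth by (auto simp: norm_eq_sqrt_inner)
  then have "0 \<notin> range vs"
    by (metis norm_zero zero_neq_one)
  then have "independent (range vs)"
    using orthogonal pairwise_orthogonal_independent by blast
  moreover have "dim (UNIV :: (real ^ 'n) set) \<le> card (range vs)"
    using inj by (simp add: card_image)
  ultimately have "v \<in> span (range vs)"
    using card_ge_dim_independent[OF subset_UNIV] by blast
  then show ?thesis
    using orthonormal_basis_expand[OF orthogonal unit, of v] inj
    by (simp add: sum.reindex)
qed

lemma subspace_lindblad_span: "subspace (lindblad_span lam vs)"
  unfolding lindblad_span_def by (rule subspace_span)

lemma lindblad_in_lindblad_span: "lindblad lam vs j \<in> lindblad_span lam vs"
  unfolding lindblad_span_def by (intro span_base UnI1 UnI2 rangeI)

context
  fixes C :: "real ^ 'n::finite ^ 'n" and vs :: "'n \<Rightarrow> real ^ 'n" and lam :: "'n \<Rightarrow> real"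
  assumes Csym: "transpose C = C"
    and orth: "\<forall>i j. vs i \<bullet> vs j = (if i = j then 1 else 0)"
    and eig: "\<forall>j. C *v vs j = lam j *\<^sub>R vs j"
begin

lemma colspace_orthogonal_kernel:
  assumes "v \<in> colspace C" and "lam j = 0"
  shows "v \<bullet> vs j = 0"
proof -
  obtain x where "v = C *v x" using assms(1) by (auto simp: colspace_def)
  then have "v \<bullet> vs j = x \<bullet> (C *v vs j)"
    using Csym by (metis dot_lmul_matrix vector_transpose_matrix)
  then show ?thesis using eig assms(2) by simp
qed

lemma eigenvector_in_colspace:
  assumes "lam j \<noteq> 0"
  shows "vs j \<in> colspace C"
proof -
  have "C *v ((1 / lam j) *\<^sub>R vs j) = vs j"
    using eig assms by (simp add: matrix_vector_mult_scaleR)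
  then show ?thesis unfolding colspace_def by (metis rangeI)
qed

lemma dotZ_in_lindblad_span:
  assumes lam_nn: "\<forall>j. 0 \<le> lam j" and v: "v \<in> colspace C"
  shows "dotZ v \<in> lindblad_span lam vs"
proof -
  have "dotZ v = (\<Sum>j\<in>UNIV. (v \<bullet> vs j) *\<^sub>R dotZ (vs j))"
    by (subst orthonormal_expansion[OF orth, of v])
      (simp add: linear_sum[OF linear_dotZ] linear_scale[OF linear_dotZ])
  also have "\<dots> \<in> lindblad_span lam vs"
  proof (intro subspace_sum[OF subspace_lindblad_span])
    fix j
    show "(v \<bullet> vs j) *\<^sub>R dotZ (vs j) \<in> lindblad_span lam vs"
    proof (cases "lam j = 0")
      case True
      then show ?thesis
        using colspace_orthogonal_kernel[OF v] subspace_0[OF subspace_lindblad_span] by simp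
    next
      case False
      then have "dotZ (vs j) = (1 / sqrt (lam j)) *\<^sub>R lindblad lam vs j"
        using lam_nn by (simp add: lindblad_def)
      then show ?thesis
        using subspace_scale[OF subspace_lindblad_span lindblad_in_lindblad_span] by simp
    qed
  qed
  finally show ?thesis .
qed

lemma lindblad_span_code_scalar:
  assumes N3: "CARD('n) \<ge> 3" and perp: "\<forall>v\<in>colspace C. v \<bullet> bloch_z \<theta> = 0"
    and S: "S \<in> lindblad_span lam vs"
  shows "code_scalar \<theta> S"
proof -
  have scale: "code_scalar \<theta> A \<Longrightarrow> code_scalar \<theta> (c *\<^sub>R A)" for A c
    using subspace_scale[OF subspace_code_scalar] by simp
  have "code_scalar \<theta> (mat 1)"
    unfolding mat_1_eq_zstring by (rule code_scalar_zstring) simp_all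
  moreover have "code_scalar \<theta> (lindblad lam vs j)" for j
  proof (cases "lam j = 0")
    case True
    then show ?thesis using subspace_0[OF subspace_code_scalar] by (simp add: lindblad_def)
  next
    case False
    have "code_scalar \<theta> (dotZ (vs j))"
      using N3 perp eigenvector_in_colspace[OF False] by (intro code_scalar_dotZ) auto
    then show ?thesis unfolding lindblad_def by (rule scale)
  qed
  moreover have "code_scalar \<theta> (lindblad lam vs i ** lindblad lam vs j)" for i j
    unfolding lindblad_def matrix_scalar_ac scalar_matrix_assoc[symmetric]
    by (intro scale code_scalar_dotZ_mult N3)
  ultimately have "{mat 1} \<union> range (lindblad lam vs) \<union>
      {lindblad lam vs i ** lindblad lam vs j | i j. True} \<subseteq> {S. code_scalar \<theta> S}"
    by blast
  then have "lindblad_span lam vs \<subseteq> {S. code_scalar \<theta> S}"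
    unfolding lindblad_span_def by (intro span_minimal subspace_code_scalar)
  then show ?thesis using S by blast
qed

end

section \<open>\<open>\<ell>\<^sub>1\<close>--\<open>\<ell>\<^sub>\<infinity>\<close> duality\<close>

lemma infnorm_le_iff: "infnorm (x :: real ^ 'n::finite) \<le> c \<longleftrightarrow> (\<forall>j. \<bar>x $ j\<bar> \<le> c)"
proof
  assume "infnorm x \<le> c"
  then show "\<forall>j. \<bar>x $ j\<bar> \<le> c" using component_le_infnorm_cart order_trans by blast
next
  assume "\<forall>j. \<bar>x $ j\<bar> \<le> c"
  then show "infnorm x \<le> c" unfolding infnorm_cart by (intro cSup_least) auto
qed

lemma norm_le_l1norm: "norm x \<le> l1norm x"
  unfolding l1norm_def by (rule norm_le_l1_cart)

lemma l1norm_pos_iff: "0 < l1norm x \<longleftrightarrow> x \<noteq> 0"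
proof
  show "0 < l1norm x \<Longrightarrow> x \<noteq> 0" by (auto simp: l1norm_def)
  show "x \<noteq> 0 \<Longrightarrow> 0 < l1norm x" by (rule less_le_trans[OF _ norm_le_l1norm]) simp
qed

lemma l1norm_triangle: "l1norm (x + y) \<le> l1norm x + l1norm y"
  unfolding l1norm_def by (simp add: sum_mono abs_triangle_ineq flip: sum.distrib)

lemma l1norm_scaleR: "l1norm (c *\<^sub>R x) = \<bar>c\<bar> * l1norm x"
  by (simp add: l1norm_def abs_mult sum_distrib_left)

lemma l1norm_axis: "l1norm (axis k c) = \<bar>c\<bar>"
proof -
  have "\<bar>axis k c $ j\<bar> = (if j = k then \<bar>c\<bar> else 0)" for j
    by (simp add: axis_def)
  then show ?thesis by (simp add: l1norm_def)
qed

lemma continuous_on_l1norm: "continuous_on S (l1norm :: real ^ 'n::finite \<Rightarrow> real)"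
  unfolding l1norm_def[abs_def] by (intro continuous_intros)

lemma inner_le_l1norm:
  assumes "infnorm b \<le> 1"
  shows "b \<bullet> x \<le> l1norm x"
proof -
  have "b $ j * x $ j \<le> \<bar>b $ j\<bar> * \<bar>x $ j\<bar>" for j
    by (metis abs_ge_self abs_mult)
  also have "\<bar>b $ j\<bar> * \<bar>x $ j\<bar> \<le> \<bar>x $ j\<bar>" for j
    using assms unfolding infnorm_le_iff by (simp add: mult_left_le_one_le)
  finally have "b $ j * x $ j \<le> \<bar>x $ j\<bar>" for j .
  then show ?thesis by (simp add: inner_vec_def l1norm_def sum_mono)
qed

lemma l1_dual_le:
  assumes "infnorm b \<le> 1" and "\<forall>v\<in>V. b \<bullet> v = 0" and "v \<in> V"
  shows "b \<bullet> h \<le> l1norm (h - v)"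
  using assms inner_le_l1norm[OF assms(1), of "h - v"] by (simp add: inner_diff_right)

lemma l1_distance_attained:
  fixes V :: "(real ^ 'n::finite) set"
  assumes "closed V" and "a \<in> V"
  obtains v0 where "v0 \<in> V" and "\<And>v. v \<in> V \<Longrightarrow> l1norm (h - v0) \<le> l1norm (h - v)"
proof -
  let ?T = "V \<inter> cball h (l1norm (h - a))"
  have "compact ?T" using assms(1) by (intro closed_Int_compact compact_cball)
  moreover have "a \<in> ?T"
    using assms(2) norm_le_l1norm[of "h - a"] by (simp add: dist_norm)
  moreover have "continuous_on ?T (\<lambda>v. l1norm (h - v))"
    by (intro continuous_on_compose2[OF continuous_on_l1norm] continuous_intros) auto
  ultimately obtain v0 where v0: "v0 \<in> ?T"
    and min: "\<And>v. v \<in> ?T \<Longrightarrow> l1norm (h - v0) \<le> l1norm (h - v)"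
    using continuous_attains_inf[of ?T] by blast
  have "l1norm (h - v0) \<le> l1norm (h - v)" if "v \<in> V" for v
  proof (cases "v \<in> ?T")
    case False
    then have "l1norm (h - a) < norm (h - v)" using that by (simp add: dist_norm)
    also have "\<dots> \<le> l1norm (h - v)" by (rule norm_le_l1norm)
    finally show ?thesis using min[OF \<open>a \<in> ?T\<close>] by simp
  qed (rule min)
  with v0 show ?thesis using that by blast
qed

lemma l1_ball_support:
  assumes "0 < m" and "\<And>y. l1norm y < m \<Longrightarrow> a \<bullet> y \<le> c"
  shows "m * infnorm (a :: real ^ 'n::finite) \<le> c"
proof -
  have "m * \<bar>a $ k\<bar> \<le> c" for k
  proof (rule field_le_mult_one_interval)
    fix z :: real
    assume z: "0 < z" "z < 1"
    let ?y = "axis k (z * m * sgn (a $ k))"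
    have "l1norm ?y \<le> z * m"
      using z assms(1) by (simp add: l1norm_axis abs_mult abs_sgn_eq)
    also have "\<dots> < m" using z assms(1) by simp
    finally have "a \<bullet> ?y \<le> c" by (rule assms(2))
    moreover have "a \<bullet> ?y = z * (m * \<bar>a $ k\<bar>)"
      by (simp add: inner_axis abs_sgn algebra_simps)
    ultimately show "z * (m * \<bar>a $ k\<bar>) \<le> c" by simp
  qed
  then have "infnorm a \<le> c / m"
    unfolding infnorm_le_iff using assms(1) by (simp add: le_divide_eq mult.commute)
  then show ?thesis using assms(1) by (simp add: le_divide_eq mult.commute)
qed

lemma subspace_bounded_inner_eq_0:
  assumes "subspace V" and "\<forall>x\<in>V. a \<bullet> x \<le> \<beta>" and "v \<in> V"
  shows "a \<bullet> v = 0"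
proof (rule ccontr)
  assume nz: "a \<bullet> v \<noteq> 0"
  have "((\<beta> + 1) / (a \<bullet> v)) *\<^sub>R v \<in> V" using assms by (simp add: subspace_scale)
  then have "a \<bullet> (((\<beta> + 1) / (a \<bullet> v)) *\<^sub>R v) \<le> \<beta>" using assms(2) by blast
  with nz show False by simp
qed

lemma convex_l1_ball: "convex {x. l1norm (h - x) < (m::real)}" for h :: "real ^ 'n::finite"
proof (rule convexI)
  fix x y :: "real ^ 'n" and u v :: real
  assume x: "x \<in> {x. l1norm (h - x) < m}" and y: "y \<in> {x. l1norm (h - x) < m}"
    and uv: "0 \<le> u" "0 \<le> v" "u + v = 1"
  have "h - (u *\<^sub>R x + v *\<^sub>R y) = u *\<^sub>R (h - x) + v *\<^sub>R (h - y)"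
    using uv by (simp add: algebra_simps flip: scaleR_add_left)
  then have "l1norm (h - (u *\<^sub>R x + v *\<^sub>R y)) \<le> u * l1norm (h - x) + v * l1norm (h - y)"
    using uv l1norm_triangle[of "u *\<^sub>R (h - x)" "v *\<^sub>R (h - y)"] by (simp add: l1norm_scaleR)
  also have "\<dots> < m" using x y uv by (intro convex_bound_lt) auto
  finally show "u *\<^sub>R x + v *\<^sub>R y \<in> {x. l1norm (h - x) < m}" by simp
qed

lemma l1_dual_attained:
  assumes "subspace V" and "v0 \<in> V" and min: "\<And>v. v \<in> V \<Longrightarrow> l1norm (h - v0) \<le> l1norm (h - v)"
  obtains b where "infnorm b \<le> 1" and "\<forall>v\<in>V. b \<bullet> v = 0" and "b \<bullet> h = l1norm (h - v0)"
proof (cases "h = v0")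
  case True
  then show ?thesis using that[of 0] by (simp add: infnorm_0 l1norm_def)
next
  case False
  define m where "m = l1norm (h - v0)"
  then have "0 < m" using False by (simp add: l1norm_pos_iff)
  let ?B = "{x. l1norm (h - x) < m}"
  have "?B \<inter> V = {}" using min by (force simp: m_def)
  moreover have "h \<in> ?B" using \<open>0 < m\<close> by (simp add: l1norm_def)
  ultimately obtain a \<beta> where "a \<noteq> 0"
    and V: "\<forall>x\<in>V. a \<bullet> x \<le> \<beta>" and B: "\<forall>x\<in>?B. \<beta> \<le> a \<bullet> x"
    using separating_hyperplane_sets[OF subspace_imp_convex[OF assms(1)] convex_l1_ball, of h m]
      assms(2) by blast
  have perp: "\<forall>v\<in>V. a \<bullet> v = 0"
    using subspace_bounded_inner_eq_0[OF assms(1) V] by blast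
  have "0 \<le> \<beta>" using V subspace_0[OF assms(1)] by force
  have "a \<bullet> y \<le> a \<bullet> h" if "l1norm y < m" for y
    using B[rule_format, of "h - y"] that \<open>0 \<le> \<beta>\<close> by (simp add: inner_diff_right)
  then have "m * infnorm a \<le> a \<bullet> h" by (rule l1_ball_support[OF \<open>0 < m\<close>])
  define b where "b = (1 / infnorm a) *\<^sub>R a"
  have pos: "0 < infnorm a" using \<open>a \<noteq> 0\<close> by (simp add: infnorm_pos_lt)
  have "infnorm b \<le> 1" using pos by (simp add: b_def infnorm_mul)
  moreover have "\<forall>v\<in>V. b \<bullet> v = 0" using perp by (simp add: b_def)
  moreover have "m \<le> b \<bullet> h"
    using \<open>m * infnorm a \<le> a \<bullet> h\<close> pos by (simp add: b_def le_divide_eq)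
  moreover have "b \<bullet> h \<le> m"
    using l1_dual_le[OF calculation(1,2) assms(2)] by (simp add: m_def)
  ultimately show ?thesis using that m_def by force
qed

section \<open>Distance of the Hamiltonian to the Lindblad span\<close>

lemma bloch_z_arccos:
  assumes "infnorm b \<le> 1"
  shows "bloch_z (\<chi> j. arccos (b $ j) / 2) = b"
  using assms by (simp add: bloch_z_def infnorm_le_iff cos_arccos_abs vec_eq_iff)

lemma subspace_colspace: "subspace (colspace C)"
  unfolding colspace_def by (rule linear_subspace_image[OF matrix_vector_mul_linear subspace_UNIV])

lemma feasible_le:
  assumes "feasible C b" and "v \<in> colspace C"
  shows "b \<bullet> h \<le> l1norm (h - v)"
  using assms l1_dual_le[of b "colspace C" v h] unfolding feasible_def by blast

lemma colspace_l1_duality: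
  obtains v0 b where "v0 \<in> colspace C"
    and "\<And>v. v \<in> colspace C \<Longrightarrow> l1norm (h - v0) \<le> l1norm (h - v)"
    and "feasible C b" and "b \<bullet> h = l1norm (h - v0)"
proof -
  obtain v0 where v0: "v0 \<in> colspace C"
    and min: "\<And>v. v \<in> colspace C \<Longrightarrow> l1norm (h - v0) \<le> l1norm (h - v)"
    using l1_distance_attained[OF closed_subspace subspace_0] subspace_colspace by blast
  then obtain b where "infnorm b \<le> 1" "\<forall>v\<in>colspace C. b \<bullet> v = 0" "b \<bullet> h = l1norm (h - v0)"
    using l1_dual_attained[OF subspace_colspace] by blast
  with v0 min show ?thesis using that unfolding feasible_def by blast
qed

lemma opnorm_hamiltonian_diff_dotZ:
  "opnorm (hamiltonian h - (1 / 2) *\<^sub>R dotZ v) \<le> l1norm (h - v) / 2"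
proof -
  have "hamiltonian h - (1 / 2) *\<^sub>R dotZ v = dotZ ((1 / 2) *\<^sub>R (h - v))"
    by (simp add: hamiltonian_def linear_diff[OF linear_dotZ] linear_scale[OF linear_dotZ]
        scaleR_diff_right)
  then show ?thesis using opnorm_dotZ_le[of "(1 / 2) *\<^sub>R (h - v)"] by (simp add: l1norm_scaleR)
qed

context
  fixes C :: "real ^ 'n::finite ^ 'n" and vs :: "'n \<Rightarrow> real ^ 'n" and lam :: "'n \<Rightarrow> real"
  assumes Csym: "transpose C = C"
    and orth: "\<forall>i j. vs i \<bullet> vs j = (if i = j then 1 else 0)"
    and eig: "\<forall>j. C *v vs j = lam j *\<^sub>R vs j"
    and N3: "CARD('n) \<ge> 3"
begin

lemma feasible_code_scalar:
  assumes "feasible C b" and "S \<in> lindblad_span lam vs"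
  shows "code_scalar (\<chi> j. arccos (b $ j) / 2) S"
proof (rule lindblad_span_code_scalar[OF Csym orth eig N3 _ assms(2)])
  show "\<forall>v\<in>colspace C. v \<bullet> bloch_z (\<chi> j. arccos (b $ j) / 2) = 0"
    using assms(1) unfolding feasible_def by (simp add: bloch_z_arccos inner_commute)
qed

lemma dephasing_code_properties:
  assumes "feasible C b"
  defines "\<theta> \<equiv> \<chi> j. arccos (b $ j) / 2"
  shows "\<forall>S\<in>lindblad_span lam vs. \<exists>r::real. code_proj \<theta> ** S ** code_proj \<theta> = r *\<^sub>R code_proj \<theta>"
    and "braket (ket0L \<theta>) (hamiltonian h) (ket1L \<theta>) = 0"
    and "braket (ket0L \<theta>) (hamiltonian h) (ket0L \<theta>) - braket (ket1L \<theta>) (hamiltonian h) (ket1L \<theta>)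
           = of_real (h \<bullet> b)"
    and "qfi ((1 / sqrt 2) *\<^sub>R (ket0L \<theta> + ket1L \<theta>)) (code_proj \<theta> ** hamiltonian h ** code_proj \<theta>) t
           = of_real (t\<^sup>2 * (h \<bullet> b)\<^sup>2)"
proof -
  have N2: "CARD('n) \<ge> 2" using N3 by simp
  have b: "bloch_z \<theta> = b"
    using assms(1) unfolding \<theta>_def feasible_def by (simp add: bloch_z_arccos)
  show "\<forall>S\<in>lindblad_span lam vs. \<exists>r::real. code_proj \<theta> ** S ** code_proj \<theta> = r *\<^sub>R code_proj \<theta>"
    unfolding \<theta>_def using assms(1) by (blast intro: code_proj_sandwich feasible_code_scalar)
  show "braket (ket0L \<theta>) (hamiltonian h) (ket1L \<theta>) = 0"
    using braket_code_dotZ(3)[OF N2] by (simp add: hamiltonian_def)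
  show "braket (ket0L \<theta>) (hamiltonian h) (ket0L \<theta>) - braket (ket1L \<theta>) (hamiltonian h) (ket1L \<theta>)
      = of_real (h \<bullet> b)"
    using braket_code_dotZ(1,2)[OF N2] b by (simp add: hamiltonian_def flip: of_real_diff)
  show "qfi ((1 / sqrt 2) *\<^sub>R (ket0L \<theta> + ket1L \<theta>)) (code_proj \<theta> ** hamiltonian h ** code_proj \<theta>) t
      = of_real (t\<^sup>2 * (h \<bullet> b)\<^sup>2)"
    using qfi_code_hamiltonian[OF N2] b by simp
qed

lemma opnorm_hamiltonian_diff_lindblad_ge:
  assumes "feasible C b" and "S \<in> lindblad_span lam vs"
  shows "h \<bullet> b \<le> 2 * opnorm (hamiltonian h - S)"
proof -
  define \<theta> where "\<theta> = (\<chi> j. arccos (b $ j) / 2)"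
  have "code_scalar \<theta> S" unfolding \<theta>_def using assms by (rule feasible_code_scalar)
  then have "braket (ket0L \<theta>) (hamiltonian h - S) (ket0L \<theta>) -
      braket (ket1L \<theta>) (hamiltonian h - S) (ket1L \<theta>) = of_real (h \<bullet> b)"
    using dephasing_code_properties(3)[OF assms(1), of h] unfolding \<theta>_def code_scalar_def by simp
  then show ?thesis
    using code_gap_le_opnorm[of \<theta> "hamiltonian h - S"] by simp
qed

lemma hamiltonian_distance_lindblad_span:
  assumes lam_nn: "\<forall>j. 0 \<le> lam j" and "v0 \<in> colspace C" and "feasible C b"
    and hb: "b \<bullet> h = l1norm (h - v0)"
  shows "Inf {opnorm (hamiltonian h - S) | S. S \<in> lindblad_span lam vs} = l1norm (h - v0) / 2"
    and "\<exists>S\<in>lindblad_span lam vs. opnorm (hamiltonian h - S) = l1norm (h - v0) / 2"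
proof -
  let ?S0 = "(1 / 2) *\<^sub>R dotZ v0"
  have S0: "?S0 \<in> lindblad_span lam vs"
    using dotZ_in_lindblad_span[OF Csym orth eig lam_nn assms(2)]
    by (rule subspace_scale[OF subspace_lindblad_span[of lam vs]])
  have lower: "l1norm (h - v0) / 2 \<le> opnorm (hamiltonian h - S)" if "S \<in> lindblad_span lam vs" for S
    using opnorm_hamiltonian_diff_lindblad_ge[OF assms(3) that, of h] hb by (simp add: inner_commute)
  have opt: "opnorm (hamiltonian h - ?S0) = l1norm (h - v0) / 2"
    using lower[OF S0] opnorm_hamiltonian_diff_dotZ[of h v0] by simp
  with S0 show "\<exists>S\<in>lindblad_span lam vs. opnorm (hamiltonian h - S) = l1norm (h - v0) / 2" ..
  have "l1norm (h - v0) / 2 \<in> {opnorm (hamiltonian h - S) | S. S \<in> lindblad_span lam vs}"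
    using S0 opt by force
  then show "Inf {opnorm (hamiltonian h - S) | S. S \<in> lindblad_span lam vs} = l1norm (h - v0) / 2"
    using lower by (intro cInf_eq_minimum) auto
qed

end

theorem mainTheorem5:
  fixes h :: "real ^ 'n::finite" and C :: "real ^ 'n ^ 'n"
    and vs :: "'n \<Rightarrow> real ^ 'n" and lam :: "'n \<Rightarrow> real"
  assumes N3: "CARD('n) \<ge> 3"
    and Csym: "transpose C = C"
    and Cpsd: "\<forall>x. 0 \<le> x \<bullet> (C *v x)"
    and orth: "\<forall>i j. vs i \<bullet> vs j = (if i = j then 1 else 0)"
    and eig: "\<forall>j. C *v vs j = lam j *\<^sub>R vs j"
    and lam_nn: "\<forall>j. 0 \<le> lam j"
    and hcol: "h \<notin> colspace C"
  shows
   "let m = Inf {l1norm (h - v) | v. v \<in> colspace C};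
        H = hamiltonian h;
        SS = lindblad_span lam vs;
        mS = Inf {opnorm (H - S) | S. S \<in> SS}
    in (\<exists>v\<in>colspace C. l1norm (h - v) = m)
     \<and> (\<exists>S\<in>SS. opnorm (H - S) = mS)
     \<and> (\<exists>b. feasible C b \<and> b \<bullet> h = m)
     \<and> (\<forall>b. feasible C b \<longrightarrow> b \<bullet> h \<le> m)
     \<and> m = 2 * mS
     \<and> (\<forall>b. feasible C b \<and> (\<forall>b'. feasible C b' \<longrightarrow> b' \<bullet> h \<le> b \<bullet> h) \<longrightarrow>
          (let \<theta> = (\<chi> j. arccos (b $ j) / 2);
               P = code_proj \<theta>; k0 = ket0L \<theta>; k1 = ket1L \<theta>;
               \<psi> = (1 / sqrt 2) *\<^sub>R (k0 + k1)
           in (\<forall>S\<in>SS. \<exists>r::real. P ** S ** P = r *\<^sub>R P)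
            \<and> braket k0 H k1 = 0
            \<and> braket k0 H k0 - braket k1 H k1 = complex_of_real (h \<bullet> b)
            \<and> h \<bullet> b = m \<and> m > 0
            \<and> (\<forall>t::real. qfi \<psi> (P ** H ** P) t = complex_of_real (t^2 * m^2)
                      \<and> qfi \<psi> (P ** H ** P) t = complex_of_real (4 * t^2 * mS^2))))"
proof -
  let ?V = "colspace C" and ?H = "hamiltonian h" and ?SS = "lindblad_span lam vs"
  obtain v0 b0 where v0: "v0 \<in> ?V"
    and min: "\<And>v. v \<in> ?V \<Longrightarrow> l1norm (h - v0) \<le> l1norm (h - v)"
    and b0: "feasible C b0" "b0 \<bullet> h = l1norm (h - v0)"
    using colspace_l1_duality[where C = C and h = h] by blast
  define m where "m = l1norm (h - v0)"
  have m: "Inf {l1norm (h - v) | v. v \<in> ?V} = m"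
    unfolding m_def by (rule cInf_eq_minimum) (use v0 min in auto)
  have "0 < m" using hcol v0 unfolding m_def l1norm_pos_iff by auto
  have upper: "b \<bullet> h \<le> m" if "feasible C b" for b
    using feasible_le[OF that v0] by (simp add: m_def)
  have optimal: "h \<bullet> b = m" if "feasible C b" "\<forall>b'. feasible C b' \<longrightarrow> b' \<bullet> h \<le> b \<bullet> h" for b
    using that upper[OF that(1)] b0 by (force simp: inner_commute m_def)
  note mS = hamiltonian_distance_lindblad_span[OF Csym orth eig N3 lam_nn v0 b0, folded m_def]
  note code = dephasing_code_properties[OF Csym orth eig N3]
  show ?thesis
    unfolding Let_def m mS(1)
  proof (intro conjI allI impI; (elim conjE)?)
    show "\<exists>v\<in>?V. l1norm (h - v) = m" using v0 m_def by blast
    show "\<exists>S\<in>?SS. opnorm (?H - S) = m / 2" by (rule mS(2))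
    show "\<exists>b. feasible C b \<and> b \<bullet> h = m" using b0 m_def by blast
  qed (simp_all add: upper optimal code \<open>0 < m\<close> power_divide)
qed

end
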